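(* Let $D\in\{D_1,D_2,\dots,D_8\}$. For every positive integer $v$ with $v\equiv 7\pmod{14}$, there exists a $D$-decomposition of $K^*_v$.
   Context: $K^*_v$ denotes the complete symmetric digraph of order $v$: it contains both arcs $(x,y)$ and $(y,x)$ for every pair of distinct vertices $x,y$. A $D$-decomposition of a digraph $K$ is a set of subdigraphs of $K$, each isomorphic to $D$, such that every arc of $K$ lies in exactly one of them. For distinct vertices $v_0,\dots,v_6$, the digraphs $D_i[v_0,v_1,\dots,v_6]$ ($i\in[1,8]$) all have vertex set $\{v_0,\dots,v_6\}$ and the following arc sets: $D_1$: $(v_1,v_0),(v_1,v_2),(v_2,v_3),(v_3,v_4),(v_4,v_5),(v_5,v_6),(v_6,v_0)$; $D_2$: $(v_1,v_0),(v_2,v_1),(v_2,v_3),(v_3,v_4),(v_4,v_5),(v_5,v_6),(v_6,v_0)$; $D_3$: $(v_1,v_0),(v_1,v_2),(v_3,v_2),(v_3,v_4),(v_4,v_5),(v_5,v_6),(v_6,v_0)$; $D_4$: $(v_1,v_0),(v_1,v_2),(v_2,v_3),(v_4,v_3),(v_4,v_5),(v_5,v_6),(v_6,v_0)$; $D_5$: $(v_1,v_0),(v_2,v_1),(v_3,v_2),(v_3,v_4),(v_4,v_5),(v_5,v_6),(v_6,v_0)$; $D_6$: $(v_1,v_0),(v_2,v_1),(v_2,v_3),(v_3,v_4),(v_5,v_4),(v_5,v_6),(v_6,v_0)$; $D_7$: $(v_1,v_0),(v_1,v_2),(v_3,v_2),(v_3,v_4),(v_4,v_5),(v_6,v_5),(v_6,v_0)$;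 $D_8$: $(v_1,v_0),(v_2,v_1),(v_2,v_3),(v_4,v_3),(v_4,v_5),(v_5,v_6),(v_6,v_0)$. $D_i$ also denotes the isomorphism type of $D_i[v_0,\dots,v_6]$. *)

theory Defs
  imports Main
begin

type_synonym 'a digraph = "'a set \<times> ('a \<times> 'a) set"

definition Kstar :: "nat \<Rightarrow> nat digraph" where
  "Kstar v = ({0..<v}, {(x, y). x < v \<and> y < v \<and> x \<noteq> y})"

text \<open>The arc sets of D_1,...,D_8 on the abstract vertices 0..6 (index k stands for v_k).\<close>

definition D_arcs :: "nat \<Rightarrow> (nat \<times> nat) set" where
  "D_arcs i =
    (if i = 1 then {(1,0),(1,2),(2,3),(3,4),(4,5),(5,6),(6,0)}
     else if i = 2 then {(1,0),(2,1),(2,3),(3,4),(4,5),(5,6),(6,0)}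
     else if i = 3 then {(1,0),(1,2),(3,2),(3,4),(4,5),(5,6),(6,0)}
     else if i = 4 then {(1,0),(1,2),(2,3),(4,3),(4,5),(5,6),(6,0)}
     else if i = 5 then {(1,0),(2,1),(3,2),(3,4),(4,5),(5,6),(6,0)}
     else if i = 6 then {(1,0),(2,1),(2,3),(3,4),(5,4),(5,6),(6,0)}
     else if i = 7 then {(1,0),(1,2),(3,2),(3,4),(4,5),(6,5),(6,0)}
     else if i = 8 then {(1,0),(2,1),(2,3),(4,3),(4,5),(5,6),(6,0)}
     else {})"

definition D_inst :: "nat \<Rightarrow> (nat \<Rightarrow> 'a) \<Rightarrow> 'a digraph" where
  "D_inst i f = (f ` {0..6}, (\<lambda>(a, b). (f a, f b)) ` D_arcs i)"

definition subdigraph :: "'a digraph \<Rightarrow> 'a digraph \<Rightarrow> bool" where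
  "subdigraph H G \<longleftrightarrow> fst H \<subseteq> fst G \<and> snd H \<subseteq> snd G \<and> snd H \<subseteq> fst H \<times> fst H"

definition iso_D :: "nat \<Rightarrow> 'a digraph \<Rightarrow> bool" where
  "iso_D i H \<longleftrightarrow> (\<exists>f. inj_on f {0..6} \<and> H = D_inst i f)"

definition D_decomposition :: "nat \<Rightarrow> 'a digraph \<Rightarrow> 'a digraph set \<Rightarrow> bool" where
  "D_decomposition i G \<D> \<longleftrightarrow>
     (\<forall>H\<in>\<D>. subdigraph H G \<and> iso_D i H) \<and>
     (\<forall>e\<in>snd G. \<exists>!H. H \<in> \<D> \<and> e \<in> snd H)"

end

theory Submission
  imports Defs "HOL-Number_Theory.Cong"
begin

text \<open>Write \<open>v = 7 m\<close> with \<open>m\<close> odd and regard the vertices of \<open>K*_v\<close> as the cells of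
  \<open>\<int>\<^sub>m \<times> \<int>\<^sub>7\<close> (row \<open>y\<close>, column \<open>x\<close>). The arcs inside a row are covered by placing a
  fixed \<open>D\<close>-decomposition of \<open>K*_7\<close> (six copies) in every row. For the arcs between rows,
  vertex \<open>k\<close> of \<open>D\<close> gets a label \<open>(Y k, X k)\<close> such that the column differences
  \<open>X q - X p\<close> of the seven arcs of \<open>D\<close> run through \<open>\<int>\<^sub>7\<close> exactly once and every row
  difference \<open>Y q - Y p\<close> is \<open>\<plusminus>1\<close> or \<open>\<plusminus>2\<close>, a unit modulo the odd \<open>m\<close>. The copies
  \<open>k \<mapsto> (y\<^sub>0 + b Y k, x\<^sub>0 + X k)\<close> with \<open>b \<noteq> 0\<close> then cover every arc between distinct rows
  exactly once: the column difference of the arc selects the arc of \<open>D\<close>, its row difference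
  determines \<open>b\<close>, and its tail determines \<open>(y\<^sub>0, x\<^sub>0)\<close>.\<close>

lemma D_arcs_bounded: "(p, q) \<in> D_arcs i \<Longrightarrow> p \<le> 6 \<and> q \<le> 6 \<and> p \<noteq> q"
  by (auto simp: D_arcs_def split: if_splits)

lemma finite_D_arcs: "finite (D_arcs i)"
  by (simp add: D_arcs_def)

lemma card_D_arcs_le: "card (D_arcs i) \<le> 7"
  by (simp add: D_arcs_def)

lemma arc_of_D_inst: "e \<in> snd (D_inst i f) \<longleftrightarrow> (\<exists>(p, q)\<in>D_arcs i. e = (f p, f q))"
  by (auto simp: D_inst_def)

lemma D_inst_in_Kstar:
  assumes "inj_on f {0..6}" and "\<And>k. k \<le> 6 \<Longrightarrow> f k < v"
  shows "subdigraph (D_inst i f) (Kstar v) \<and> iso_D i (D_inst i f)"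
proof
  show "iso_D i (D_inst i f)"
    unfolding iso_D_def using assms(1) by blast
  have "(f p, f q) \<in> snd (Kstar v) \<and> (f p, f q) \<in> fst (D_inst i f) \<times> fst (D_inst i f)"
    if "(p, q) \<in> D_arcs i" for p q
    using D_arcs_bounded[OF that] assms inj_onD[OF assms(1), of p q]
    by (auto simp: Kstar_def D_inst_def)
  moreover have "fst (D_inst i f) \<subseteq> fst (Kstar v)"
    using assms(2) by (auto simp: Kstar_def D_inst_def)
  ultimately show "subdigraph (D_inst i f) (Kstar v)"
    by (auto simp: subdigraph_def subset_iff arc_of_D_inst)
qed

lemma D_decomposition_KstarI:
  fixes F :: "'p \<Rightarrow> nat \<Rightarrow> nat"
  assumes inj: "\<And>t. t \<in> P \<Longrightarrow> inj_on (F t) {0..6}"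
    and range: "\<And>t k. t \<in> P \<Longrightarrow> k \<le> 6 \<Longrightarrow> F t k < v"
    and cover: "\<And>u w. u < v \<Longrightarrow> w < v \<Longrightarrow> u \<noteq> w \<Longrightarrow>
      \<exists>t\<in>P. \<exists>(p, q)\<in>D_arcs i. F t p = u \<and> F t q = w"
    and unique: "\<And>t t' p q p' q'. t \<in> P \<Longrightarrow> t' \<in> P \<Longrightarrow> (p, q) \<in> D_arcs i \<Longrightarrow>
      (p', q') \<in> D_arcs i \<Longrightarrow> F t p = F t' p' \<Longrightarrow> F t q = F t' q' \<Longrightarrow> t = t'"
  shows "D_decomposition i (Kstar v) ((\<lambda>t. D_inst i (F t)) ` P)"
  unfolding D_decomposition_def
proof (intro conjI)
  show "\<forall>H\<in>(\<lambda>t. D_inst i (F t)) ` P. subdigraph H (Kstar v) \<and> iso_D i H"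
    using D_inst_in_Kstar[OF inj range] by blast
  show "\<forall>e\<in>snd (Kstar v). \<exists>!H. H \<in> (\<lambda>t. D_inst i (F t)) ` P \<and> e \<in> snd H"
  proof
    fix e assume "e \<in> snd (Kstar v)"
    then obtain u w where e: "e = (u, w)" "u < v" "w < v" "u \<noteq> w"
      by (auto simp: Kstar_def)
    then obtain t p q where t: "t \<in> P" "(p, q) \<in> D_arcs i" "F t p = u" "F t q = w"
      using cover by blast
    show "\<exists>!H. H \<in> (\<lambda>t. D_inst i (F t)) ` P \<and> e \<in> snd H"
    proof (rule ex1I)
      show "D_inst i (F t) \<in> (\<lambda>t. D_inst i (F t)) ` P \<and> e \<in> snd (D_inst i (F t))"
        using t e by (auto simp: arc_of_D_inst)
      fix H assume "H \<in> (\<lambda>t. D_inst i (F t)) ` P \<and> e \<in> snd H"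
      then obtain t' p' q' where "t' \<in> P" "H = D_inst i (F t')" "(p', q') \<in> D_arcs i"
        "F t' p' = u" "F t' q' = w"
        using e by (auto simp: arc_of_D_inst)
      then show "H = D_inst i (F t)"
        using unique[of t t' p q p' q'] t by simp
    qed
  qed
qed

definition cell :: "int \<Rightarrow> int \<Rightarrow> int \<Rightarrow> nat" where
  "cell m y x = nat (7 * (y mod m) + x mod 7)"

lemma cell_eq_iff:
  assumes "m > 0"
  shows "cell m y x = cell m y' x' \<longleftrightarrow> [y = y'] (mod m) \<and> [x = x'] (mod 7)"
proof -
  let ?l = "7 * (y mod m) + x mod 7" and ?r = "7 * (y' mod m) + x' mod 7"
  have "?l = ?r \<longleftrightarrow> y mod m = y' mod m \<and> x mod 7 = x' mod 7"
  proof
    assume "?l = ?r"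
    then have "?l div 7 = ?r div 7" "?l mod 7 = ?r mod 7" by simp_all
    then show "y mod m = y' mod m \<and> x mod 7 = x' mod 7" by simp
  qed simp
  moreover have "?l \<ge> 0" "?r \<ge> 0" using assms by simp_all
  ultimately show ?thesis
    unfolding cell_def cong_def by (metis eq_nat_nat_iff)
qed

lemma cell_less:
  assumes "m > 0" and "int v = 7 * m"
  shows "cell m y x < v"
proof -
  have "y mod m \<le> m - 1" "x mod 7 < 7" using assms(1) by simp_all
  then have "7 * (y mod m) + x mod 7 < int v" using assms(2) by linarith
  then show ?thesis unfolding cell_def using assms(1) by (simp add: nat_less_iff)
qed

lemma cell_div_mod: "int u < 7 * m \<Longrightarrow> cell m (int u div 7) (int u mod 7) = u"
  unfolding cell_def by simp

lemma coprime_one_two: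
  fixes m d :: int
  assumes "odd m" and "\<bar>d\<bar> \<in> {1, 2}"
  shows "coprime d m"
proof -
  have "\<bar>d\<bar> = 1 \<or> \<bar>d\<bar> = 2" using assms(2) by simp
  then show ?thesis
    using assms(1) by (metis coprime_1_left coprime_left_2_iff_odd coprime_abs_left_iff)
qed

lemma cong_mult_cancel_one_two:
  fixes m d b b' :: int
  assumes "odd m" and "\<bar>d\<bar> \<in> {1, 2}"
  shows "[b * d = b' * d] (mod m) \<longleftrightarrow> [b = b'] (mod m)"
  using cong_mult_rcancel[OF coprime_one_two[OF assms]] .

lemma dilated_rows_differ:
  fixes m b a c y0 :: int
  assumes "odd m" and "0 < b" and "b < m" and "\<bar>a - c\<bar> \<in> {1, 2}"
  shows "[y0 + b * a \<noteq> y0 + b * c] (mod m)"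
proof
  assume "[y0 + b * a = y0 + b * c] (mod m)"
  then have "[b * a - b * c = 0] (mod m)"
    by (simp add: cong_add_lcancel cong_diff_iff_cong_0)
  then have "[b * (a - c) = 0 * (a - c)] (mod m)"
    by (simp add: right_diff_distrib)
  then have "[b = 0] (mod m)"
    using cong_mult_cancel_one_two[OF assms(1,4)] by blast
  then show False
    using cong_less_imp_eq_int[of b m 0] assms(2,3) by simp
qed

lemma unit_multiple_exists:
  fixes m d \<beta> :: int
  assumes "odd m" "m > 0" "\<bar>d\<bar> \<in> {1, 2}" and "[\<beta> \<noteq> 0] (mod m)"
  obtains b where "b \<in> {1..<m}" "[b * d = \<beta>] (mod m)"
proof -
  obtain s where s: "[d * s = 1] (mod m)"
    using cong_solve_coprime_int[OF coprime_one_two[OF assms(1,3)]] by blast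
  define b where "b = (s * \<beta>) mod m"
  have "[b * d = s * \<beta> * d] (mod m)"
    unfolding b_def by (simp add: cong_def mod_simps)
  also have "s * \<beta> * d = (d * s) * \<beta>"
    by (simp add: ac_simps)
  also have "[\<dots> = 1 * \<beta>] (mod m)"
    using s by (rule cong_scalar_right)
  finally have bd: "[b * d = \<beta>] (mod m)" by simp
  have "b \<noteq> 0"
    using bd assms(4) by (auto simp: cong_sym_eq)
  moreover have "0 \<le> b" "b < m" unfolding b_def using assms(2) by simp_all
  ultimately show ?thesis using bd by (intro that[of b]) auto
qed

text \<open>Only covering is demanded: six copies of \<open>D_i\<close> have at most 42 arcs, as many as
  \<open>K*_7\<close>, so by counting no arc is covered twice (\<open>Z7_unique\<close>).\<close>

definition Z7_decomposition :: "nat \<Rightarrow> (nat \<Rightarrow> nat \<Rightarrow> int) \<Rightarrow> bool" where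
  "Z7_decomposition i G \<longleftrightarrow>
     (\<forall>j<6. \<forall>k<7. 0 \<le> G j k \<and> G j k < 7) \<and>
     (\<forall>j<6. \<forall>k<7. \<forall>l<7. G j k = G j l \<longrightarrow> k = l) \<and>
     (\<forall>a\<in>{0..6}. \<forall>c\<in>{0..6}. a \<noteq> c \<longrightarrow> (\<exists>j<6. \<exists>(p, q)\<in>D_arcs i. G j p = a \<and> G j q = c))"

definition mixed_labelling :: "nat \<Rightarrow> (nat \<Rightarrow> int) \<Rightarrow> (nat \<Rightarrow> int) \<Rightarrow> bool" where
  "mixed_labelling i X Y \<longleftrightarrow>
     (\<forall>k<7. \<forall>l<7. k \<noteq> l \<longrightarrow> [X k \<noteq> X l] (mod 7) \<or> \<bar>Y k - Y l\<bar> \<in> {1, 2}) \<and>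
     (\<forall>(p, q)\<in>D_arcs i. \<bar>Y q - Y p\<bar> \<in> {1, 2}) \<and>
     bij_betw (\<lambda>(p, q). (X q - X p) mod 7) (D_arcs i) {0..6}"

definition row_copy :: "int \<Rightarrow> (nat \<Rightarrow> nat \<Rightarrow> int) \<Rightarrow> int \<times> nat \<Rightarrow> nat \<Rightarrow> nat" where
  "row_copy m G = (\<lambda>(y, j) k. cell m y (G j k))"

definition cross_copy :: "int \<Rightarrow> (nat \<Rightarrow> int) \<Rightarrow> (nat \<Rightarrow> int) \<Rightarrow> int \<times> int \<times> int \<Rightarrow> nat \<Rightarrow> nat" where
  "cross_copy m X Y = (\<lambda>(b, x0, y0) k. cell m (y0 + b * Y k) (x0 + X k))"

context
  fixes m :: int and i :: nat and G :: "nat \<Rightarrow> nat \<Rightarrow> int"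
  assumes m_pos: "m > 0" and G: "Z7_decomposition i G"
begin

lemma Z7_range: "j < 6 \<Longrightarrow> k \<le> 6 \<Longrightarrow> 0 \<le> G j k \<and> G j k < 7"
  using G unfolding Z7_decomposition_def by simp

lemma Z7_inj: "j < 6 \<Longrightarrow> k \<le> 6 \<Longrightarrow> l \<le> 6 \<Longrightarrow> G j k = G j l \<Longrightarrow> k = l"
  using G unfolding Z7_decomposition_def by simp

lemma Z7_cover:
  assumes "a \<in> {0..6}" "c \<in> {0..6}" "a \<noteq> c"
  obtains j p q where "j < 6" "(p, q) \<in> D_arcs i" "G j p = a" "G j q = c"
proof -
  have "\<exists>j<6. \<exists>(p, q)\<in>D_arcs i. G j p = a \<and> G j q = c"
    using G assms unfolding Z7_decomposition_def by simp
  then show ?thesis using that by (auto simp: Bex_def)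
qed

lemma Z7_cong_imp_eq:
  "j < 6 \<Longrightarrow> j' < 6 \<Longrightarrow> k \<le> 6 \<Longrightarrow> k' \<le> 6 \<Longrightarrow> [G j k = G j' k'] (mod 7) \<Longrightarrow> G j k = G j' k'"
  using Z7_range[of j k] Z7_range[of j' k'] cong_less_imp_eq_int by blast

lemma Z7_unique:
  assumes "j < 6" "j' < 6" "(p, q) \<in> D_arcs i" "(p', q') \<in> D_arcs i"
    and "G j p = G j' p'" "G j q = G j' q'"
  shows "j = j'"
proof -
  let ?A = "{..<6::nat} \<times> D_arcs i" and ?\<phi> = "\<lambda>(j, p, q). (G j p, G j q)"
  let ?O = "{0..6} \<times> {0..6} - (\<lambda>a. (a, a)) ` {0..6::int}"
  have "finite ?A" by (simp add: finite_D_arcs)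
  have "?O \<subseteq> ?\<phi> ` ?A"
  proof
    fix e assume "e \<in> ?O"
    then obtain a c where "e = (a, c)" "a \<in> {0..6}" "c \<in> {0..6}" "a \<noteq> c"
      by (auto simp: image_iff)
    then obtain j p q where "j < 6" "(p, q) \<in> D_arcs i" "G j p = a" "G j q = c"
      by (metis Z7_cover)
    then show "e \<in> ?\<phi> ` ?A" using \<open>e = (a, c)\<close> by force
  qed
  then have "card ?O \<le> card (?\<phi> ` ?A)"
    using \<open>finite ?A\<close> by (intro card_mono) simp_all
  moreover have "card ?O = 42"
    by (subst card_Diff_subset) (auto simp: card_cartesian_product card_image inj_on_def)
  moreover have "card ?A \<le> 42"
    using card_D_arcs_le[of i] by (simp add: card_cartesian_product)
  ultimately have "card (?\<phi> ` ?A) = card ?A"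
    using card_image_le[OF \<open>finite ?A\<close>, of ?\<phi>] by linarith
  then have "inj_on ?\<phi> ?A"
    by (rule eq_card_imp_inj_on[OF \<open>finite ?A\<close>])
  then show ?thesis
    using inj_onD[of ?\<phi> ?A "(j, p, q)" "(j', p', q')"] assms by auto
qed

lemma row_copy_inj:
  assumes "t \<in> {0..<m} \<times> {..<6}"
  shows "inj_on (row_copy m G t) {0..6}"
proof (rule inj_onI)
  fix k l assume kl: "k \<in> {0..6}" "l \<in> {0..6}" "row_copy m G t k = row_copy m G t l"
  obtain y j where t: "t = (y, j)" "j < 6" using assms by auto
  have "[G j k = G j l] (mod 7)"
    using kl(3) by (simp add: t row_copy_def cell_eq_iff[OF m_pos])
  then have "G j k = G j l"
    using Z7_cong_imp_eq t(2) kl(1,2) by simp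
  then show "k = l"
    using Z7_inj kl(1,2) t(2) by simp
qed

lemma row_arc_exists:
  assumes "[yu = yw] (mod m)" and "[xu \<noteq> xw] (mod 7)"
  shows "\<exists>t\<in>{0..<m} \<times> {..<6}. \<exists>(p, q)\<in>D_arcs i.
    row_copy m G t p = cell m yu xu \<and> row_copy m G t q = cell m yw xw"
proof -
  have "xu mod 7 \<in> {0..6}" "xw mod 7 \<in> {0..6}" "xu mod 7 \<noteq> xw mod 7"
    using assms(2) by (auto simp: cong_def)
  then obtain j p q where j: "j < 6" "(p, q) \<in> D_arcs i"
    "G j p = xu mod 7" "G j q = xw mod 7"
    by (rule Z7_cover)
  have "row_copy m G (yu mod m, j) p = cell m yu xu"
    "row_copy m G (yu mod m, j) q = cell m yw xw"
    using j assms(1) by (simp_all add: row_copy_def cell_eq_iff[OF m_pos] cong_sym)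
  moreover have "(yu mod m, j) \<in> {0..<m} \<times> {..<6}" using m_pos j(1) by simp
  ultimately show ?thesis using j(2) by blast
qed

lemma row_arc_unique:
  assumes "t \<in> {0..<m} \<times> {..<6}" "t' \<in> {0..<m} \<times> {..<6}"
    and "(p, q) \<in> D_arcs i" "(p', q') \<in> D_arcs i"
    and "row_copy m G t p = row_copy m G t' p'" "row_copy m G t q = row_copy m G t' q'"
  shows "t = t'"
proof -
  obtain y j y' j' where t: "t = (y, j)" "t' = (y', j')" by fastforce
  have j: "j < 6" "j' < 6" using assms(1,2) t by auto
  have "[y = y'] (mod m)" "[G j p = G j' p'] (mod 7)" "[G j q = G j' q'] (mod 7)"
    using assms(5,6) by (simp_all add: t row_copy_def cell_eq_iff[OF m_pos])
  then have "y = y'" "G j p = G j' p'" "G j q = G j' q'"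
    using assms(1-4) j Z7_cong_imp_eq D_arcs_bounded
    by (auto simp: t intro: cong_less_imp_eq_int)
  moreover have "j = j'"
    using Z7_unique[OF j assms(3,4)] calculation(2,3) .
  ultimately show ?thesis using t by simp
qed

end

context
  fixes m :: int and i :: nat and X Y :: "nat \<Rightarrow> int"
  assumes m_odd: "odd m" and m_pos: "m > 0" and XY: "mixed_labelling i X Y"
begin

lemma mixed_separates:
  "k \<le> 6 \<Longrightarrow> l \<le> 6 \<Longrightarrow> k \<noteq> l \<Longrightarrow> [X k \<noteq> X l] (mod 7) \<or> \<bar>Y k - Y l\<bar> \<in> {1, 2}"
  using XY unfolding mixed_labelling_def by simp

lemma mixed_arc_step: "(p, q) \<in> D_arcs i \<Longrightarrow> \<bar>Y q - Y p\<bar> \<in> {1, 2}"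
  using XY unfolding mixed_labelling_def by auto

lemma mixed_arc_differences: "bij_betw (\<lambda>(p, q). (X q - X p) mod 7) (D_arcs i) {0..6}"
  using XY unfolding mixed_labelling_def by simp

lemma cross_copy_inj:
  assumes "t \<in> {1..<m} \<times> {0..<7} \<times> {0..<m}"
  shows "inj_on (cross_copy m X Y t) {0..6}"
proof (rule inj_onI, rule ccontr)
  fix k l assume kl: "k \<in> {0..6}" "l \<in> {0..6}" "cross_copy m X Y t k = cross_copy m X Y t l" "k \<noteq> l"
  obtain b x0 y0 where t: "t = (b, x0, y0)" "0 < b" "b < m" using assms by auto
  have "[y0 + b * Y k = y0 + b * Y l] (mod m)" "[X k = X l] (mod 7)"
    using kl(3) by (simp_all add: t cross_copy_def cell_eq_iff[OF m_pos] cong_add_lcancel)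
  then show False
    using mixed_separates[of k l] kl(1,2,4) dilated_rows_differ[OF m_odd t(2,3)] by auto
qed

lemma cross_arc_rows_differ:
  assumes "t \<in> {1..<m} \<times> {0..<7} \<times> {0..<m}" and "(p, q) \<in> D_arcs i"
    and "cross_copy m X Y t p = cell m y x" and "cross_copy m X Y t q = cell m y' x'"
  shows "[y \<noteq> y'] (mod m)"
proof
  assume "[y = y'] (mod m)"
  obtain b x0 y0 where t: "t = (b, x0, y0)" "0 < b" "b < m" using assms(1) by auto
  have "[y0 + b * Y p = y] (mod m)" "[y0 + b * Y q = y'] (mod m)"
    using assms(3,4) by (simp_all add: t cross_copy_def cell_eq_iff[OF m_pos])
  with \<open>[y = y'] (mod m)\<close> have "[y0 + b * Y q = y0 + b * Y p] (mod m)"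
    by (meson cong_sym cong_trans)
  then show False
    using dilated_rows_differ[OF m_odd t(2,3) mixed_arc_step[OF assms(2)]] by blast
qed

lemma cross_arc_exists:
  assumes "[yu \<noteq> yw] (mod m)"
  shows "\<exists>t\<in>{1..<m} \<times> {0..<7} \<times> {0..<m}. \<exists>(p, q)\<in>D_arcs i.
    cross_copy m X Y t p = cell m yu xu \<and> cross_copy m X Y t q = cell m yw xw"
proof -
  have "(xw - xu) mod 7 \<in> (\<lambda>(p, q). (X q - X p) mod 7) ` D_arcs i"
    using bij_betw_imp_surj_on[OF mixed_arc_differences] by simp
  then obtain p q where pq: "(p, q) \<in> D_arcs i" "[X q - X p = xw - xu] (mod 7)"
    by (auto simp: cong_def)
  have "[yw - yu \<noteq> 0] (mod m)"
    using assms cong_diff_iff_cong_0[of yw yu m] cong_sym by blast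
  then obtain b where b: "b \<in> {1..<m}" and bd: "[b * (Y q - Y p) = yw - yu] (mod m)"
    using unit_multiple_exists[OF m_odd m_pos mixed_arc_step[OF pq(1)]] by blast
  define x0 where "x0 = (xu - X p) mod 7"
  define y0 where "y0 = (yu - b * Y p) mod m"
  have "[y0 + b * Y p = yu] (mod m)" "[x0 + X p = xu] (mod 7)"
    unfolding x0_def y0_def by (simp_all add: cong_def mod_simps)
  moreover have "[y0 + b * Y q = yw] (mod m)"
  proof -
    have "[y0 + b * Y q = yu + b * (Y q - Y p)] (mod m)"
      unfolding y0_def by (simp add: cong_def mod_simps algebra_simps)
    also have "[yu + b * (Y q - Y p) = yu + (yw - yu)] (mod m)"
      using bd by (rule cong_add[OF cong_refl])
    finally show ?thesis by simp
  qed
  moreover have "[x0 + X q = xw] (mod 7)"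
  proof -
    have "[x0 + X q = xu + (X q - X p)] (mod 7)"
      unfolding x0_def by (simp add: cong_def mod_simps algebra_simps)
    also have "[xu + (X q - X p) = xu + (xw - xu)] (mod 7)"
      using pq(2) by (rule cong_add[OF cong_refl])
    finally show ?thesis by simp
  qed
  ultimately have "cross_copy m X Y (b, x0, y0) p = cell m yu xu"
    "cross_copy m X Y (b, x0, y0) q = cell m yw xw"
    by (simp_all add: cross_copy_def cell_eq_iff[OF m_pos])
  moreover have "(b, x0, y0) \<in> {1..<m} \<times> {0..<7} \<times> {0..<m}"
    using b m_pos unfolding x0_def y0_def by simp
  ultimately show ?thesis using pq(1) by blast
qed

lemma cross_arc_unique:
  assumes "t \<in> {1..<m} \<times> {0..<7} \<times> {0..<m}" "t' \<in> {1..<m} \<times> {0..<7} \<times> {0..<m}"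
    and "(p, q) \<in> D_arcs i" "(p', q') \<in> D_arcs i"
    and "cross_copy m X Y t p = cross_copy m X Y t' p'" "cross_copy m X Y t q = cross_copy m X Y t' q'"
  shows "t = t'"
proof -
  obtain b x0 y0 b' x0' y0' where t: "t = (b, x0, y0)" "t' = (b', x0', y0')"
    by (metis prod_cases3)
  have cy: "[y0 + b * Y p = y0' + b' * Y p'] (mod m)" "[y0 + b * Y q = y0' + b' * Y q'] (mod m)"
    and cx: "[x0 + X p = x0' + X p'] (mod 7)" "[x0 + X q = x0' + X q'] (mod 7)"
    using assms(5,6) by (simp_all add: t cross_copy_def cell_eq_iff[OF m_pos])
  have "[X q - X p = X q' - X p'] (mod 7)"
    using cong_diff[OF cx(2) cx(1)] by simp
  then have "(p, q) = (p', q')"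
    using inj_onD[OF bij_betw_imp_inj_on[OF mixed_arc_differences] _ assms(3,4)]
    by (simp add: cong_def)
  then have pq: "p' = p" "q' = q" by simp_all
  have "[x0 = x0'] (mod 7)"
    using cx(1) by (simp add: pq cong_add_rcancel)
  then have "x0 = x0'"
    using assms(1,2) by (auto simp: t intro: cong_less_imp_eq_int)
  have "[b * (Y q - Y p) = b' * (Y q - Y p)] (mod m)"
    using cong_diff[OF cy(2) cy(1)] by (simp add: pq right_diff_distrib)
  then have "[b = b'] (mod m)"
    using cong_mult_cancel_one_two[OF m_odd mixed_arc_step[OF assms(3)]] by blast
  then have "b = b'"
    using assms(1,2) by (auto simp: t intro: cong_less_imp_eq_int)
  have "[y0 = y0'] (mod m)"
    using cy(1) by (simp add: pq \<open>b = b'\<close> cong_add_rcancel)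
  then have "y0 = y0'"
    using assms(1,2) by (auto simp: t intro: cong_less_imp_eq_int)
  show ?thesis
    using t \<open>x0 = x0'\<close> \<open>b = b'\<close> \<open>y0 = y0'\<close> by simp
qed

end

definition copy_params :: "int \<Rightarrow> (int \<times> nat + int \<times> int \<times> int) set" where
  "copy_params m = Inl ` ({0..<m} \<times> {..<6}) \<union> Inr ` ({1..<m} \<times> {0..<7} \<times> {0..<m})"

definition copy :: "int \<Rightarrow> (nat \<Rightarrow> nat \<Rightarrow> int) \<Rightarrow> (nat \<Rightarrow> int) \<Rightarrow> (nat \<Rightarrow> int) \<Rightarrow>
    int \<times> nat + int \<times> int \<times> int \<Rightarrow> nat \<Rightarrow> nat" where
  "copy m G X Y = case_sum (row_copy m G) (cross_copy m X Y)"

context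
  fixes m :: int and i :: nat and G :: "nat \<Rightarrow> nat \<Rightarrow> int" and X Y :: "nat \<Rightarrow> int"
  assumes m_odd: "odd m" and m_pos: "m > 0"
    and G: "Z7_decomposition i G" and XY: "mixed_labelling i X Y"
begin

lemma copy_inj: "t \<in> copy_params m \<Longrightarrow> inj_on (copy m G X Y t) {0..6}"
  using row_copy_inj[OF m_pos G] cross_copy_inj[OF m_odd m_pos XY]
  by (auto simp: copy_params_def copy_def)

lemma copy_less: "int v = 7 * m \<Longrightarrow> copy m G X Y t k < v"
  using cell_less[OF m_pos]
  by (cases t) (auto simp: copy_def row_copy_def cross_copy_def split: prod.splits)

lemma copy_arc_exists:
  assumes "int v = 7 * m" "u < v" "w < v" "u \<noteq> w"
  shows "\<exists>t\<in>copy_params m. \<exists>(p, q)\<in>D_arcs i. copy m G X Y t p = u \<and> copy m G X Y t q = w"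
proof -
  define yu xu yw xw where "yu = int u div 7" "xu = int u mod 7" "yw = int w div 7" "xw = int w mod 7"
  have u: "u = cell m yu xu" and w: "w = cell m yw xw"
    unfolding yu_xu_yw_xw_def using assms(1-3) by (simp_all add: cell_div_mod)
  show ?thesis
  proof (cases "[yu = yw] (mod m)")
    case True
    moreover have "[xu \<noteq> xw] (mod 7)" using True assms(4) u w cell_eq_iff[OF m_pos] by auto
    ultimately have "\<exists>r\<in>{0..<m} \<times> {..<6}. \<exists>(p, q)\<in>D_arcs i. row_copy m G r p = u \<and> row_copy m G r q = w"
      unfolding u w by (rule row_arc_exists[OF m_pos G])
    then obtain r p q where "r \<in> {0..<m} \<times> {..<6}" "(p, q) \<in> D_arcs i"
      "row_copy m G r p = u" "row_copy m G r q = w"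
      by (auto simp: Bex_def)
    then show ?thesis
      by (intro bexI[of _ "Inl r"] bexI[of _ "(p, q)"]) (auto simp: copy_def copy_params_def)
  next
    case False
    then have "\<exists>c\<in>{1..<m} \<times> {0..<7} \<times> {0..<m}. \<exists>(p, q)\<in>D_arcs i.
        cross_copy m X Y c p = u \<and> cross_copy m X Y c q = w"
      unfolding u w by (rule cross_arc_exists[OF m_odd m_pos XY])
    then obtain c p q where "c \<in> {1..<m} \<times> {0..<7} \<times> {0..<m}" "(p, q) \<in> D_arcs i"
      "cross_copy m X Y c p = u" "cross_copy m X Y c q = w"
      by (auto simp: Bex_def)
    then show ?thesis
      by (intro bexI[of _ "Inr c"] bexI[of _ "(p, q)"]) (auto simp: copy_def copy_params_def)
  qed
qed

lemma row_cross_arcs_disjoint: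
  assumes "c \<in> {1..<m} \<times> {0..<7} \<times> {0..<m}" "(p', q') \<in> D_arcs i"
  shows "row_copy m G r p \<noteq> cross_copy m X Y c p' \<or> row_copy m G r q \<noteq> cross_copy m X Y c q'"
proof -
  obtain y j where "r = (y, j)" by fastforce
  then show ?thesis
    using cross_arc_rows_differ[OF m_odd m_pos XY assms, of y "G j p" y "G j q"]
    by (auto simp: row_copy_def)
qed

lemma copy_arc_unique:
  assumes "t \<in> copy_params m" "t' \<in> copy_params m"
    and arcs: "(p, q) \<in> D_arcs i" "(p', q') \<in> D_arcs i"
    and ends: "copy m G X Y t p = copy m G X Y t' p'" "copy m G X Y t q = copy m G X Y t' q'"
  shows "t = t'"
proof (cases t; cases t')
  fix r r' assume "t = Inl r" "t' = Inl r'"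
  then show ?thesis
    using row_arc_unique[OF m_pos G _ _ arcs] assms(1,2) ends by (auto simp: copy_params_def copy_def)
next
  fix r c' assume "t = Inl r" "t' = Inr c'"
  then show ?thesis
    using row_cross_arcs_disjoint[OF _ arcs(2), of c' r p q] assms(2) ends
    by (auto simp: copy_params_def copy_def)
next
  fix c r' assume "t = Inr c" "t' = Inl r'"
  then show ?thesis
    using row_cross_arcs_disjoint[OF _ arcs(1), of c r' p' q'] assms(1) ends
    by (auto simp: copy_params_def copy_def)
next
  fix c c' assume "t = Inr c" "t' = Inr c'"
  then show ?thesis
    using cross_arc_unique[OF m_odd m_pos XY _ _ arcs] assms(1,2) ends
    by (auto simp: copy_params_def copy_def)
qed

end

lemma D_decomposition_Kstar_7m:
  fixes m :: int
  assumes "odd m" "m > 0" "int v = 7 * m" "Z7_decomposition i G" "mixed_labelling i X Y"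
  shows "D_decomposition i (Kstar v) ((\<lambda>t. D_inst i (copy m G X Y t)) ` copy_params m)"
  using D_decomposition_KstarI[OF copy_inj[OF assms(1,2,4,5)] copy_less[OF assms(1,2,4,5,3)]
      copy_arc_exists[OF assms(1,2,4,5,3)] copy_arc_unique[OF assms(1,2,4,5)]] .

definition mixed_X :: "nat \<Rightarrow> nat \<Rightarrow> int" where
  "mixed_X i k =
    [[0,0,1,0,2,5,2], [0,1,0,0,2,5,2], [0,1,1,0,2,0,3], [0,1,1,3,2,0,3],
     [0,0,1,0,2,5,2], [0,0,1,3,0,6,2], [0,0,1,3,0,3,1], [0,0,1,3,2,0,3]] ! (i - 1) ! k"

definition mixed_Y :: "nat \<Rightarrow> nat \<Rightarrow> int" where
  "mixed_Y i k =
    [[0,1,0,2,0,1,2], [0,1,2,1,0,1,2], [0,1,0,1,0,2,1], [0,1,0,1,0,1,2],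
     [0,1,0,2,0,1,2], [0,1,0,1,2,0,1], [0,1,0,1,2,0,1], [0,1,0,2,0,2,1]] ! (i - 1) ! k"

definition Z7_labels :: "nat \<Rightarrow> nat \<Rightarrow> nat \<Rightarrow> int" where
  "Z7_labels i j k =
    [[[1,0,2,3,4,5,6],[1,2,0,3,6,5,4],[1,3,0,4,6,2,5],[3,1,4,2,6,0,5],[2,1,5,0,6,4,3],[0,1,6,3,5,2,4]],
     [[1,0,2,3,4,5,6],[1,2,0,3,6,5,4],[1,3,6,0,4,2,5],[2,6,1,4,0,5,3],[6,0,1,3,5,2,4],[0,5,1,2,6,4,3]],
     [[1,0,2,3,4,5,6],[1,2,3,0,4,6,5],[1,3,5,0,6,2,4],[0,1,2,5,3,6,4],[0,6,3,1,4,2,5],[0,2,6,1,5,4,3]],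
     [[1,0,2,3,4,5,6],[1,2,0,3,6,5,4],[1,3,0,4,6,2,5],[2,1,3,6,4,0,5],[6,1,4,2,3,5,0],[4,2,6,0,1,5,3]],
     [[1,0,2,3,4,5,6],[1,2,0,3,6,5,4],[1,3,0,4,6,2,5],[3,6,2,1,5,0,4],[3,2,4,1,6,0,5],[4,6,0,1,3,5,2]],
     [[1,0,2,3,4,5,6],[1,2,0,3,5,6,4],[1,3,6,0,4,2,5],[2,3,4,0,5,1,6],[6,0,1,4,2,5,3],[0,3,1,2,6,4,5]],
     [[1,0,2,3,4,5,6],[1,2,3,0,4,6,5],[1,3,5,0,6,2,4],[0,1,2,5,4,3,6],[0,5,3,1,6,4,2],[6,2,5,1,4,0,3]],
     [[1,0,2,3,4,5,6],[1,2,0,3,6,5,4],[2,4,0,5,1,3,6],[4,1,5,2,3,0,6],[6,2,1,0,5,3,4],[0,4,2,5,3,1,6]]]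
    ! (i - 1) ! j ! k"

lemma int_atLeastAtMost_0_6: "{0..6::int} = {0, 1, 2, 3, 4, 5, 6}"
  by auto

lemma nat_atLeastAtMost_1_8: "{1..8::nat} = {1, 2, 3, 4, 5, 6, 7, 8}"
  by auto

lemma mixed_labelling_mixed_XY: "i \<in> {1..8} \<Longrightarrow> mixed_labelling i (mixed_X i) (mixed_Y i)"
  unfolding nat_atLeastAtMost_1_8 mixed_labelling_def bij_betw_def int_atLeastAtMost_0_6
  by (elim insertE emptyE; simp add: D_arcs_def mixed_X_def mixed_Y_def numeral_eq_Suc All_less_Suc
      cong_def insert_commute)

lemma Z7_decomposition_Z7_labels: "i \<in> {1..8} \<Longrightarrow> Z7_decomposition i (Z7_labels i)"
  unfolding nat_atLeastAtMost_1_8 Z7_decomposition_def int_atLeastAtMost_0_6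
  by (elim insertE emptyE; simp add: D_arcs_def Z7_labels_def numeral_eq_Suc All_less_Suc Ex_less_Suc)

theorem lemma3p5:
  fixes i v :: nat
  assumes "i \<in> {1..8}" and "v > 0" and "v mod 14 = 7"
  shows "\<exists>\<D>. D_decomposition i (Kstar v) \<D>"
proof -
  define m where "m = int (v div 7)"
  have "v div 7 = 2 * (v div 14) + 1" using assms(3) by presburger
  then have "odd m" "m > 0" unfolding m_def by simp_all
  moreover have "int v = 7 * m" unfolding m_def using assms(3) by presburger
  ultimately show ?thesis
    using D_decomposition_Kstar_7m Z7_decomposition_Z7_labels[OF assms(1)]
      mixed_labelling_mixed_XY[OF assms(1)] by blast
qed

end
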